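(* In the setting of the previous statement (sample space $\mathcal{X}\times\mathcal{Y}$, hypothesis set $\mathcal{H}$, learning algorithm $\mathcal{A}$ given by a Markov kernel $\mathcal{P}_{H|S}$, $S\sim\mathcal{P}^n$ i.i.d., $H=\mathcal{A}(S)$ with $\mathcal{P}_{SH}\ll\mathcal{P}_S\mathcal{P}_H$, $0$-$1$ loss, $\eta\in(0,1)$ and $E=\{(s,h):|L_{\mathcal{P}}(h)-L_s(h)|>\eta\}$), fix $\alpha>1$, let $\gamma=\frac{\alpha}{\alpha-1}$ and $\delta\in(0,1)$. If the number of samples $n$ satisfies $$n\ge\frac{I_\alpha(S;\mathcal{A}(S))+\log2+\gamma\log\left(\frac1\delta\right)}{2\eta^2},$$ then $\mathbb{P}((S,\mathcal{A}(S))\in E)\le\delta$.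
   Context: The $0$-$1$ loss is $\ell(h,(x,y))=\mathbb{1}_{h(x)\neq y}$; $L_{\mathcal{P}}(h)=\mathcal{P}(\{(x,y):h(x)\ne y\})$; for $s=((x_i,y_i))_{i=1}^n$, $L_s(h)=\frac1n\sum_{i=1}^n\mathbb{1}_{h(x_i)\ne y_i}$. Sibson's $\alpha$-mutual information is $I_\alpha(S;H)=\min_{Q_H}D_\alpha(\mathcal{P}_{SH}\|\mathcal{P}_SQ_H)$ with $D_\alpha(\mathcal{P}\|\mathcal{Q})=\frac{1}{\alpha-1}\ln\int p^\alpha q^{1-\alpha}d\mu$ the Rényi divergence. Logarithms are natural. *)

theory Defs
  imports "HOL-Probability.Probability"
begin

text \<open>Samples of size n are functions nat => 'x * 'y restricted to {..<n};
  the sample measure space is the n-fold product of the instance space.\<close>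

definition sample_space :: "nat \<Rightarrow> 'z measure \<Rightarrow> (nat \<Rightarrow> 'z) measure" where
  "sample_space n Z = PiM {..<n} (\<lambda>_. Z)"

definition iid_sample :: "nat \<Rightarrow> 'z measure \<Rightarrow> (nat \<Rightarrow> 'z) measure" where
  "iid_sample n P = PiM {..<n} (\<lambda>_. P)"

definition loss01 :: "('x \<Rightarrow> 'y) \<Rightarrow> 'x \<times> 'y \<Rightarrow> real" where
  "loss01 h z = (if h (fst z) \<noteq> snd z then 1 else 0)"

definition pop_risk :: "('x \<times> 'y) measure \<Rightarrow> ('x \<Rightarrow> 'y) \<Rightarrow> real" where
  "pop_risk P h = measure P {z \<in> space P. h (fst z) \<noteq> snd z}"

definition emp_risk :: "nat \<Rightarrow> (nat \<Rightarrow> 'x \<times> 'y) \<Rightarrow> ('x \<Rightarrow> 'y) \<Rightarrow> real" where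
  "emp_risk n s h = (\<Sum>i<n. loss01 h (s i)) / real n"

definition joint_dist ::
  "'s measure \<Rightarrow> ('s \<Rightarrow> 'h measure) \<Rightarrow> 'h measure \<Rightarrow> ('s \<times> 'h) measure" where
  "joint_dist PS K MH = PS \<bind> (\<lambda>s. distr (K s) (PS \<Otimes>\<^sub>M MH) (\<lambda>h. (s, h)))"

definition marginal_H :: "'s measure \<Rightarrow> ('s \<Rightarrow> 'h measure) \<Rightarrow> 'h measure" where
  "marginal_H PS K = PS \<bind> K"

text \<open>Renyi divergence D_alpha(M || N) of order alpha > 1:
  (1/(alpha-1)) ln \<integral> p^alpha q^(1-alpha) d\<mu>, which for alpha > 1 equals
  (1/(alpha-1)) ln \<integral> (dM/dN)^alpha dN if M << N and +\<infinity> otherwise.\<close>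
definition renyi_div :: "real \<Rightarrow> 'a measure \<Rightarrow> 'a measure \<Rightarrow> ereal" where
  "renyi_div \<alpha> M N =
     (let I = (\<integral>\<^sup>+ x. ennreal (enn2real (RN_deriv N M x) powr \<alpha>) \<partial>N)
      in if absolutely_continuous N M \<and> sets M = sets N \<and> I \<noteq> \<infinity>
         then ereal (ln (enn2real I) / (\<alpha> - 1)) else \<infinity>)"

definition sibson_MI :: "real \<Rightarrow> 's measure \<Rightarrow> 'h measure \<Rightarrow> ('s \<times> 'h) measure \<Rightarrow> ereal" where
  "sibson_MI \<alpha> PS MH PSH =
     (INF Q \<in> {Q. prob_space Q \<and> sets Q = sets MH}. renyi_div \<alpha> PSH (PS \<Otimes>\<^sub>M Q))"

end

theory Submission
  imports Defs
begin

text \<open>For every probability measure \<open>Q\<close> on hypotheses, Hoelder's inequality with exponents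
  \<open>\<alpha>\<close> and \<open>\<gamma>\<close> applied to the density of \<open>P\<^sub>S\<^sub>H\<close> with respect to \<open>N = P\<^sub>S \<otimes> Q\<close> gives
  \<open>\<gamma> ln P\<^sub>S\<^sub>H(E) \<le> D\<^sub>\<alpha>(P\<^sub>S\<^sub>H \<parallel> N) + ln N(E)\<close>. Under \<open>N\<close> the sample is independent of the
  hypothesis, so Hoeffding's inequality bounds \<open>N(E)\<close> by \<open>2 exp (-2 n \<eta>\<^sup>2)\<close>. Taking the
  infimum over \<open>Q\<close> yields \<open>\<gamma> ln P\<^sub>S\<^sub>H(E) \<le> I\<^sub>\<alpha>(S;H) + ln 2 - 2 n \<eta>\<^sup>2\<close>, which is at most
  \<open>\<gamma> ln \<delta>\<close> under the assumed bound on \<open>n\<close>.\<close>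

lemma Youngs_inequality_scaled:
  fixes f A b K \<alpha> \<gamma> :: real
  assumes \<alpha>: "\<alpha> > 1" and \<gamma>: "\<gamma> = \<alpha> / (\<alpha> - 1)" and A: "A > 0" and b: "b > 0" and f: "f \<ge> 0"
    and K: "K = A powr (1/\<alpha>) * b powr (1/\<gamma>)"
  shows "f \<le> K / (\<alpha> * A) * f powr \<alpha> + K / (\<gamma> * b)"
proof -
  have \<gamma>1: "\<gamma> > 1" using \<alpha> by (simp add: \<gamma> field_simps)
  have sum1: "1/\<alpha> + 1/\<gamma> = 1" using \<alpha> by (simp add: \<gamma> field_simps)
  have Ap: "A powr (1/\<alpha>) > 0" and bp: "b powr (1/\<gamma>) > 0" using A b by auto
  have "(f / A powr (1/\<alpha>)) * (1 / b powr (1/\<gamma>))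
      \<le> (f / A powr (1/\<alpha>)) powr \<alpha> / \<alpha> + (1 / b powr (1/\<gamma>)) powr \<gamma> / \<gamma>"
    by (rule Youngs_inequality) (use \<alpha> \<gamma>1 sum1 f Ap bp in auto)
  also have "(f / A powr (1/\<alpha>)) powr \<alpha> = f powr \<alpha> / A"
    using f A \<alpha> by (simp add: powr_divide powr_powr)
  also have "(1 / b powr (1/\<gamma>)) powr \<gamma> = 1 / b"
    using b \<gamma>1 by (simp add: powr_divide powr_powr)
  finally have *: "f / K \<le> f powr \<alpha> / A / \<alpha> + 1 / b / \<gamma>"
    by (simp add: K field_simps)
  have Kp: "K > 0" using Ap bp K by simp
  from mult_left_mono[OF * less_imp_le[OF Kp]] Kp show ?thesis
    by (simp add: field_simps)
qed

lemma measure_pos_if_absolutely_continuous: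
  assumes "finite_measure N" and ac: "absolutely_continuous N J"
    and E: "E \<in> sets N" and pos: "measure J E > 0"
  shows "measure N E > 0"
proof (rule ccontr)
  interpret finite_measure N by fact
  assume "\<not> measure N E > 0"
  hence "emeasure N E = 0" using E measure_nonneg[of N E] by (simp add: emeasure_eq_measure)
  hence "E \<in> null_sets J" using E ac by (auto simp: absolutely_continuous_def)
  hence "measure J E = 0" by (simp add: measure_def null_sets_def)
  thus False using pos by simp
qed

lemma emeasure_eq_nn_integral_RN_deriv:
  assumes J: "prob_space J" and N: "prob_space N"
    and ac: "absolutely_continuous N J" and sets: "sets J = sets N" and E: "E \<in> sets N"
  shows "emeasure J E = (\<integral>\<^sup>+x. ennreal (enn2real (RN_deriv N J x) * indicator E x) \<partial>N)"
proof -
  interpret J: prob_space J by fact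
  interpret N: prob_space N by fact
  have "emeasure J E = (\<integral>\<^sup>+x. indicator E x \<partial>J)" using E sets by simp
  also have "\<dots> = (\<integral>\<^sup>+x. RN_deriv N J x * indicator E x \<partial>N)"
    by (rule N.RN_deriv_nn_integral[OF ac sets]) (use E in simp)
  also have "\<dots> = (\<integral>\<^sup>+x. ennreal (enn2real (RN_deriv N J x) * indicator E x) \<partial>N)"
  proof (rule nn_integral_cong_AE)
    show "AE x in N. RN_deriv N J x * indicator E x
                     = ennreal (enn2real (RN_deriv N J x) * indicator E x)"
      using N.RN_deriv_finite[OF J.sigma_finite_measure_axioms ac sets]
      by eventually_elim (auto simp: indicator_def ennreal_enn2real_if)
  qed
  finally show ?thesis .
qed

lemma Holder_measure_bound:
  fixes J N :: "'a measure" and \<alpha> \<gamma> :: real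
  defines "I \<equiv> \<integral>\<^sup>+x. ennreal (enn2real (RN_deriv N J x) powr \<alpha>) \<partial>N"
  assumes J: "prob_space J" and N: "prob_space N"
    and ac: "absolutely_continuous N J" and sets: "sets J = sets N"
    and \<alpha>: "\<alpha> > 1" and \<gamma>: "\<gamma> = \<alpha> / (\<alpha> - 1)" and I_fin: "I \<noteq> \<infinity>"
    and E: "E \<in> sets N" and pos: "measure J E > 0"
  shows "measure J E \<le> enn2real I powr (1/\<alpha>) * measure N E powr (1/\<gamma>)"
proof -
  interpret J: prob_space J by fact
  interpret N: prob_space N by fact
  define f where "f x = enn2real (RN_deriv N J x)" for x
  define A where "A = enn2real I"
  define b where "b = measure N E"
  \<comment> \<open>Integrating Young's inequality with this constant gives exactly \<open>K\<close>, the Hoelder bound.\<close>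
  define K where "K = A powr (1/\<alpha>) * b powr (1/\<gamma>)"
  have I_eq: "I = ennreal A" using I_fin by (simp add: A_def ennreal_enn2real_if)
  have JE: "emeasure J E = (\<integral>\<^sup>+x. ennreal (f x * indicator E x) \<partial>N)"
    unfolding f_def by (rule emeasure_eq_nn_integral_RN_deriv[OF J N ac sets E])
  have b0: "b > 0" unfolding b_def
    by (rule measure_pos_if_absolutely_continuous[OF N.finite_measure_axioms ac E pos])
  have A0: "A > 0"
  proof (rule ccontr)
    assume "\<not> A > 0"
    hence "A = 0" using enn2real_nonneg[of I] by (simp add: A_def)
    hence "I = 0" using I_eq by simp
    hence "AE x in N. ennreal (f x powr \<alpha>) = 0"
      unfolding I_def f_def by (subst (asm) nn_integral_0_iff_AE) auto
    hence "AE x in N. ennreal (f x * indicator E x) = 0"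
      by eventually_elim (auto simp: indicator_def)
    moreover have "(\<lambda>x. ennreal (f x * indicator E x)) \<in> borel_measurable N"
      using E unfolding f_def by measurable
    ultimately have "emeasure J E = 0" unfolding JE by (subst nn_integral_0_iff_AE) auto
    thus False using pos by (simp add: J.emeasure_eq_measure)
  qed
  have K0: "K > 0" using A0 b0 by (simp add: K_def)
  have "emeasure J E \<le> (\<integral>\<^sup>+x. ennreal (K / (\<alpha> * A)) * ennreal (f x powr \<alpha>)
                                   + ennreal (K / (\<gamma> * b)) * indicator E x \<partial>N)"
    unfolding JE
  proof (rule nn_integral_mono)
    fix x
    have "f x \<le> K / (\<alpha> * A) * f x powr \<alpha> + K / (\<gamma> * b)"
      by (rule Youngs_inequality_scaled[OF \<alpha> \<gamma> A0 b0 _ K_def]) (simp add: f_def)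
    then have "ennreal (f x) \<le> ennreal (K / (\<alpha> * A) * f x powr \<alpha> + K / (\<gamma> * b))"
      by (rule ennreal_leI)
    also have "\<dots> = ennreal (K / (\<alpha> * A)) * ennreal (f x powr \<alpha>) + ennreal (K / (\<gamma> * b))"
      using K0 A0 b0 \<alpha> by (simp add: \<gamma> ennreal_plus[symmetric] ennreal_mult[symmetric] del: ennreal_plus)
    finally show "ennreal (f x * indicator E x)
          \<le> ennreal (K / (\<alpha> * A)) * ennreal (f x powr \<alpha>) + ennreal (K / (\<gamma> * b)) * indicator E x"
      by (cases "x \<in> E") simp_all
  qed
  also have "\<dots> = ennreal (K / (\<alpha> * A)) * I + ennreal (K / (\<gamma> * b)) * emeasure N E"
    unfolding I_def f_def using E by (subst nn_integral_add) (auto simp: nn_integral_cmult)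
  also have "\<dots> = ennreal (K / (\<alpha> * A) * A + K / (\<gamma> * b) * b)"
    using K0 A0 b0 \<alpha> I_eq
    by (simp add: b_def N.emeasure_eq_measure \<gamma> ennreal_plus[symmetric] ennreal_mult[symmetric]
             del: ennreal_plus)
  also have "K / (\<alpha> * A) * A + K / (\<gamma> * b) * b = K"
    using A0 b0 \<alpha> by (simp add: \<gamma> field_simps)
  finally show ?thesis
    using K0 by (simp add: J.emeasure_eq_measure K_def A_def b_def)
qed

lemma renyi_div_ge_ln_measure:
  fixes \<alpha> c :: real
  assumes J: "prob_space J" and N: "prob_space N" and \<alpha>: "\<alpha> > 1"
    and E: "E \<in> sets N" and pos: "measure J E > 0" and bound: "measure N E \<le> c"
  shows "ereal (\<alpha> / (\<alpha> - 1) * ln (measure J E) - ln c) \<le> renyi_div \<alpha> J N"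
proof -
  define \<gamma> where "\<gamma> = \<alpha> / (\<alpha> - 1)"
  define I where "I = (\<integral>\<^sup>+x. ennreal (enn2real (RN_deriv N J x) powr \<alpha>) \<partial>N)"
  show ?thesis
  proof (cases "absolutely_continuous N J \<and> sets J = sets N \<and> I \<noteq> \<infinity>")
    case False
    then have "renyi_div \<alpha> J N = \<infinity>"
      unfolding renyi_div_def Let_def I_def[symmetric] by argo
    then show ?thesis by simp
  next
    case True
    then have ac: "absolutely_continuous N J" and sets: "sets J = sets N" and I_fin: "I \<noteq> \<infinity>"
      by auto
    have NE: "measure N E > 0"
      using measure_pos_if_absolutely_continuous[OF _ ac E pos] N
      by (simp add: prob_space_def)
    have Holder: "measure J E \<le> enn2real I powr (1/\<alpha>) * measure N E powr (1/\<gamma>)"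
      using Holder_measure_bound[OF J N ac sets \<alpha> \<gamma>_def, folded I_def, OF I_fin E pos] .
    have A0: "enn2real I > 0"
      using Holder pos by (cases "enn2real I = 0") (auto simp: less_le)
    have "ln (measure J E) \<le> ln (enn2real I powr (1/\<alpha>) * measure N E powr (1/\<gamma>))"
      using Holder pos by simp
    also have "\<dots> = ln (enn2real I) / \<alpha> + ln (measure N E) / \<gamma>"
      using A0 NE by (simp add: ln_mult ln_powr)
    finally have "\<gamma> * ln (measure J E) \<le> \<gamma> * (ln (enn2real I) / \<alpha> + ln (measure N E) / \<gamma>)"
      using \<alpha> by (intro mult_left_mono) (auto simp: \<gamma>_def)
    also have "\<dots> = ln (enn2real I) / (\<alpha> - 1) + ln (measure N E)"
      using \<alpha> by (simp add: \<gamma>_def field_simps)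
    also have "ln (measure N E) \<le> ln c" using NE bound by simp
    finally show ?thesis using True by (simp add: renyi_div_def I_def \<gamma>_def)
  qed
qed

lemma sibson_MI_ge_ln_measure:
  fixes \<alpha> c :: real
  assumes J: "prob_space J" and PS: "prob_space PS" and \<alpha>: "\<alpha> > 1"
    and E: "E \<in> sets (PS \<Otimes>\<^sub>M MH)" and pos: "measure J E > 0"
    and bound: "\<And>Q. prob_space Q \<Longrightarrow> sets Q = sets MH \<Longrightarrow> measure (PS \<Otimes>\<^sub>M Q) E \<le> c"
  shows "ereal (\<alpha> / (\<alpha> - 1) * ln (measure J E) - ln c) \<le> sibson_MI \<alpha> PS MH J"
  unfolding sibson_MI_def
proof (rule INF_greatest)
  fix Q assume "Q \<in> {Q. prob_space Q \<and> sets Q = sets MH}"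
  then have Q: "prob_space Q" "sets Q = sets MH" by auto
  have "E \<in> sets (PS \<Otimes>\<^sub>M Q)"
    using E Q(2) sets_pair_measure_cong[OF refl Q(2)] by simp
  then show "ereal (\<alpha> / (\<alpha> - 1) * ln (measure J E) - ln c) \<le> renyi_div \<alpha> J (PS \<Otimes>\<^sub>M Q)"
    by (intro renyi_div_ge_ln_measure[OF J _ \<alpha> _ pos] bound Q prob_space_pair PS)
qed

lemma indep_vars_PiM_components:
  assumes P: "prob_space P" and n: "n > 0"
  shows "prob_space.indep_vars (PiM {..<n} (\<lambda>_. P)) (\<lambda>_. P) (\<lambda>i s. s i) {..<n}"
proof -
  let ?PS = "PiM {..<n} (\<lambda>_. P)"
  interpret PS: prob_space ?PS by (intro prob_space_PiM P)
  show ?thesis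
  proof (subst PS.indep_vars_iff_distr_eq_PiM')
    show "{..<n} \<noteq> {}" using n by auto
    show "\<And>i. i \<in> {..<n} \<Longrightarrow> (\<lambda>s. s i) \<in> measurable ?PS P"
      by (rule measurable_component_singleton[where M="\<lambda>_. P"]) auto
    have "distr ?PS ?PS (\<lambda>x. \<lambda>i\<in>{..<n}. x i) = distr ?PS ?PS (\<lambda>x. x)"
      by (intro distr_cong) (auto simp: space_PiM PiE_def extensional_restrict)
    also have "\<dots> = PiM {..<n} (\<lambda>i. distr ?PS P (\<lambda>x. x i))"
      by (simp, intro PiM_cong refl distr_PiM_component[symmetric] P) auto
    finally show "distr ?PS ?PS (\<lambda>x. \<lambda>i\<in>{..<n}. x i) = PiM {..<n} (\<lambda>i. distr ?PS P (\<lambda>x. x i))" .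
  qed
qed

lemma
  fixes P :: "('x \<times> 'y) measure"
  assumes P: "prob_space P" and C: "{z \<in> space P. h (fst z) \<noteq> snd z} \<in> sets P"
  shows borel_measurable_loss01: "loss01 h \<in> borel_measurable P"
    and integral_loss01: "integral\<^sup>L P (loss01 h) = pop_risk P h"
proof -
  let ?C = "{z \<in> space P. h (fst z) \<noteq> snd z}"
  have loss_eq: "z \<in> space P \<Longrightarrow> loss01 h z = indicator ?C z" for z
    by (auto simp: loss01_def indicator_def)
  show "loss01 h \<in> borel_measurable P"
    by (rule measurable_cong[THEN iffD2, OF loss_eq]) (auto intro: borel_measurable_indicator C)
  have "integral\<^sup>L P (loss01 h) = integral\<^sup>L P (indicator ?C)"
    by (intro Bochner_Integration.integral_cong refl loss_eq)
  also have "\<dots> = pop_risk P h"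
    using C P by (simp add: pop_risk_def prob_space.emeasure_space_1 finite_measure.emeasure_finite
                            prob_space_def)
  finally show "integral\<^sup>L P (loss01 h) = pop_risk P h" .
qed

lemma Hoeffding_emp_risk:
  fixes P :: "('x \<times> 'y) measure"
  assumes P: "prob_space P" and C: "{z \<in> space P. h (fst z) \<noteq> snd z} \<in> sets P"
    and \<eta>: "\<eta> \<ge> 0"
  shows "measure (iid_sample n P) {s \<in> space (iid_sample n P). \<eta> < \<bar>pop_risk P h - emp_risk n s h\<bar>}
          \<le> 2 * exp (-2 * real n * \<eta>\<^sup>2)"
proof (cases "n = 0")
  case True
  interpret PS: prob_space "iid_sample n P" unfolding iid_sample_def by (intro prob_space_PiM P)
  show ?thesis by (rule order_trans[OF PS.prob_le_1]) (simp add: True)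
next
  case False
  define PS where "PS = PiM {..<n} (\<lambda>_. P)"
  interpret PS: prob_space PS unfolding PS_def by (intro prob_space_PiM P)
  define X where "X = (\<lambda>(i::nat) s. loss01 h (s i))"
  have loss_meas[measurable]: "loss01 h \<in> borel_measurable P"
    by (rule borel_measurable_loss01[OF P C])
  have X_meas[measurable]: "i \<in> {..<n} \<Longrightarrow> X i \<in> borel_measurable PS" for i
    unfolding X_def PS_def by measurable
  have distr_X: "distr PS borel (X i) = distr P borel (loss01 h)" if "i \<in> {..<n}" for i
  proof -
    have "distr PS borel (X i) = distr (distr PS P (\<lambda>s. s i)) borel (loss01 h)"
      unfolding X_def PS_def using that
      by (subst distr_distr) (auto simp: comp_def intro!: measurable_component_singleton)
    also have "distr PS P (\<lambda>s. s i) = P" unfolding PS_def by (intro distr_PiM_component P that)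
    finally show ?thesis .
  qed
  have n0: "0 \<in> {..<n}" using False by simp
  interpret H: Hoeffding_ineq_iid PS "{..<n}" X "X 0" 0 1 "PS.expectation (X 0)"
  proof unfold_locales
    show "PS.indep_vars (\<lambda>_. borel) X {..<n}" unfolding X_def
      using PS.indep_vars_compose2[OF indep_vars_PiM_components[OF P, of n, folded PS_def],
                                   of "\<lambda>_. loss01 h" "\<lambda>_. borel"] False
      by simp
    show "\<And>i. i \<in> {..<n} \<Longrightarrow> distr PS borel (X i) = distr PS borel (X 0)"
      using distr_X n0 by simp
    show "AE x in PS. X 0 x \<in> {0..1}" by (auto simp: X_def loss01_def)
  qed (use n0 in simp_all)
  have mean: "PS.expectation (X 0) = pop_risk P h"
  proof -
    have "PS.expectation (X 0) = integral\<^sup>L (distr PS P (\<lambda>s. s 0)) (loss01 h)"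
      unfolding X_def PS_def using n0 by (subst integral_distr) auto
    also have "distr PS P (\<lambda>s. s 0) = P" unfolding PS_def by (intro distr_PiM_component P n0)
    finally show ?thesis using integral_loss01[OF P C] by simp
  qed
  have [measurable]: "(\<lambda>s. \<Sum>i\<in>{..<n}. X i s) \<in> borel_measurable PS"
    by (intro borel_measurable_sum X_meas)
  have "measure PS {s \<in> space PS. \<eta> < \<bar>pop_risk P h - emp_risk n s h\<bar>}
      \<le> measure PS {s \<in> space PS. \<bar>(\<Sum>i\<in>{..<n}. X i s) / real (card {..<n}) - PS.expectation (X 0)\<bar> \<ge> \<eta>}"
  proof (rule PS.finite_measure_mono)
    show "{s \<in> space PS. \<eta> < \<bar>pop_risk P h - emp_risk n s h\<bar>}
      \<subseteq> {s \<in> space PS. \<bar>(\<Sum>i\<in>{..<n}. X i s) / real (card {..<n}) - PS.expectation (X 0)\<bar> \<ge> \<eta>}"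
      unfolding mean by (force simp: emp_risk_def X_def)
  qed measurable
  also have "\<dots> \<le> 2 * exp (-2 * real (card {..<n}) * \<eta>\<^sup>2 / (1 - 0)\<^sup>2)"
    by (rule H.Hoeffding_ineq_abs_ge'[OF \<eta>]) (use False in auto)
  finally show ?thesis by (simp add: PS_def iid_sample_def)
qed

lemma measure_pair_le_slice_bound:
  assumes M: "prob_space M" and Q: "prob_space Q" and A: "A \<in> sets (M \<Otimes>\<^sub>M Q)"
    and slice: "\<And>y. y \<in> space Q \<Longrightarrow> measure M ((\<lambda>x. (x, y)) -` A) \<le> c"
  shows "measure (M \<Otimes>\<^sub>M Q) A \<le> c"
proof -
  interpret M: prob_space M by fact
  interpret Q: prob_space Q by fact
  interpret MQ: pair_prob_space M Q ..
  obtain y where "y \<in> space Q" using Q.not_empty by blast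
  then have c: "c \<ge> 0" using slice[of y] measure_nonneg order_trans by blast
  have "emeasure (M \<Otimes>\<^sub>M Q) A = (\<integral>\<^sup>+y. emeasure M ((\<lambda>x. (x, y)) -` A) \<partial>Q)"
    by (rule MQ.emeasure_pair_measure_alt2[OF A])
  also have "\<dots> \<le> (\<integral>\<^sup>+y. ennreal c \<partial>Q)"
    using slice by (intro nn_integral_mono) (simp add: M.emeasure_eq_measure ennreal_leI)
  also have "\<dots> = ennreal c" by (simp add: Q.emeasure_space_1)
  finally show ?thesis using c by (simp add: MQ.emeasure_eq_measure)
qed

lemma sets_iid_sample: "sets P = sets Z \<Longrightarrow> sets (iid_sample n P) = sets (sample_space n Z)"
  unfolding iid_sample_def sample_space_def by (intro sets_PiM_cong refl)

lemma measurable_pop_risk: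
  fixes P Z :: "('x \<times> 'y) measure" and MH :: "('x \<Rightarrow> 'y) measure"
  assumes P: "prob_space P" "sets P = sets Z"
    and L: "{(h, z) \<in> space (MH \<Otimes>\<^sub>M Z). h (fst z) \<noteq> snd z} \<in> sets (MH \<Otimes>\<^sub>M Z)"
  shows "pop_risk P \<in> borel_measurable MH"
proof -
  interpret P: prob_space P by fact
  let ?L = "{(h, z) \<in> space (MH \<Otimes>\<^sub>M Z). h (fst z) \<noteq> snd z}"
  have space_P: "space P = space Z" using P(2) by (rule sets_eq_imp_space_eq)
  have "(\<lambda>h. enn2real (emeasure P (Pair h -` ?L))) \<in> borel_measurable MH"
    using L P(2) by (intro borel_measurable_enn2real P.measurable_emeasure_Pair) simp
  moreover have "pop_risk P h = enn2real (emeasure P (Pair h -` ?L))" if "h \<in> space MH" for h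
    using that by (simp add: pop_risk_def measure_def space_pair_measure space_P)
  ultimately show ?thesis by (subst measurable_cong) auto
qed

lemma measurable_emp_risk:
  fixes Z :: "('x \<times> 'y) measure" and MH :: "('x \<Rightarrow> 'y) measure"
  assumes L: "{(h, z) \<in> space (MH \<Otimes>\<^sub>M Z). h (fst z) \<noteq> snd z} \<in> sets (MH \<Otimes>\<^sub>M Z)"
  shows "(\<lambda>(s, h). emp_risk n s h) \<in> borel_measurable (sample_space n Z \<Otimes>\<^sub>M MH)"
proof -
  let ?L = "{(h, z) \<in> space (MH \<Otimes>\<^sub>M Z). h (fst z) \<noteq> snd z}"
  let ?SH = "sample_space n Z \<Otimes>\<^sub>M MH"
  have [measurable]: "?L \<in> sets (MH \<Otimes>\<^sub>M Z)" by (fact L)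
  have "(\<lambda>x. (\<Sum>i<n. indicator ?L (snd x, fst x i)) / real n :: real) \<in> borel_measurable ?SH"
    unfolding sample_space_def by measurable
  moreover have "emp_risk n (fst x) (snd x) = (\<Sum>i<n. indicator ?L (snd x, fst x i)) / real n"
    if "x \<in> space ?SH" for x
  proof -
    have h: "snd x \<in> space MH" and s: "fst x \<in> space (sample_space n Z)"
      using that by (simp_all add: space_pair_measure mem_Times_iff)
    have "loss01 (snd x) (fst x i) = indicator ?L (snd x, fst x i)" if "i < n" for i
    proof -
      have "fst x i \<in> space Z"
        using s that by (simp add: sample_space_def space_PiM PiE_iff)
      with h show ?thesis by (auto simp: loss01_def indicator_def space_pair_measure)
    qed
    then show ?thesis by (simp add: emp_risk_def)
  qed
  ultimately show ?thesis by (subst measurable_cong) (auto simp: case_prod_beta)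
qed

lemma sets_deviation_event:
  fixes P Z :: "('x \<times> 'y) measure" and MH :: "('x \<Rightarrow> 'y) measure"
  assumes P: "prob_space P" "sets P = sets Z"
    and L: "{(h, z) \<in> space (MH \<Otimes>\<^sub>M Z). h (fst z) \<noteq> snd z} \<in> sets (MH \<Otimes>\<^sub>M Z)"
  shows "{(s, h) \<in> space (sample_space n Z \<Otimes>\<^sub>M MH). \<bar>pop_risk P h - emp_risk n s h\<bar> > \<eta>}
           \<in> sets (sample_space n Z \<Otimes>\<^sub>M MH)"
proof -
  let ?SH = "sample_space n Z \<Otimes>\<^sub>M MH"
  have "(\<lambda>x. pop_risk P (snd x)) \<in> borel_measurable ?SH"
    using measurable_pop_risk[OF P L] by (rule measurable_compose[OF measurable_snd])
  moreover have "(\<lambda>x. emp_risk n (fst x) (snd x)) \<in> borel_measurable ?SH"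
    using measurable_emp_risk[OF L] by (simp add: case_prod_beta')
  ultimately have "(\<lambda>x. \<bar>pop_risk P (snd x) - emp_risk n (fst x) (snd x)\<bar>) \<in> borel_measurable ?SH"
    by (intro borel_measurable_abs borel_measurable_diff)
  then have "{x \<in> space ?SH. \<eta> < \<bar>pop_risk P (snd x) - emp_risk n (fst x) (snd x)\<bar>} \<in> sets ?SH"
    by (intro borel_measurable_less) simp_all
  then show ?thesis by (simp add: case_prod_beta')
qed

lemma measure_deviation_event_product_le:
  fixes P Z :: "('x \<times> 'y) measure" and MH Q :: "('x \<Rightarrow> 'y) measure"
  assumes P: "prob_space P" "sets P = sets Z"
    and L: "{(h, z) \<in> space (MH \<Otimes>\<^sub>M Z). h (fst z) \<noteq> snd z} \<in> sets (MH \<Otimes>\<^sub>M Z)"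
    and Q: "prob_space Q" "sets Q = sets MH" and \<eta>: "\<eta> \<ge> 0"
  shows "measure (iid_sample n P \<Otimes>\<^sub>M Q)
           {(s, h) \<in> space (sample_space n Z \<Otimes>\<^sub>M MH). \<bar>pop_risk P h - emp_risk n s h\<bar> > \<eta>}
         \<le> 2 * exp (-2 * real n * \<eta>\<^sup>2)"
proof (rule measure_pair_le_slice_bound[OF _ Q(1)])
  let ?PS = "iid_sample n P"
  let ?E = "{(s, h) \<in> space (sample_space n Z \<Otimes>\<^sub>M MH). \<bar>pop_risk P h - emp_risk n s h\<bar> > \<eta>}"
  show "prob_space ?PS" unfolding iid_sample_def by (intro prob_space_PiM P(1))
  show "?E \<in> sets (?PS \<Otimes>\<^sub>M Q)"
    using sets_deviation_event[OF P L]
    by (simp add: sets_pair_measure_cong[OF sets_iid_sample[OF P(2)] Q(2)])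
  fix h assume "h \<in> space Q"
  then have h: "h \<in> space MH" using sets_eq_imp_space_eq[OF Q(2)] by simp
  have space_P: "space P = space Z" using P(2) by (rule sets_eq_imp_space_eq)
  have space_PS: "space ?PS = space (sample_space n Z)"
    using sets_iid_sample[OF P(2)] by (rule sets_eq_imp_space_eq)
  have "Pair h -` {(h, z) \<in> space (MH \<Otimes>\<^sub>M Z). h (fst z) \<noteq> snd z} \<in> sets Z"
    using L by (rule sets_Pair1)
  also have "Pair h -` {(h, z) \<in> space (MH \<Otimes>\<^sub>M Z). h (fst z) \<noteq> snd z}
             = {z \<in> space P. h (fst z) \<noteq> snd z}"
    using h unfolding space_pair_measure[of MH Z] space_P by blast
  finally have C: "{z \<in> space P. h (fst z) \<noteq> snd z} \<in> sets P" using P(2) by simp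
  have "(\<lambda>s. (s, h)) -` ?E = {s \<in> space ?PS. \<eta> < \<bar>pop_risk P h - emp_risk n s h\<bar>}"
    using h unfolding space_pair_measure[of "sample_space n Z" MH] space_PS by blast
  then show "measure ?PS ((\<lambda>s. (s, h)) -` ?E) \<le> 2 * exp (-2 * real n * \<eta>\<^sup>2)"
    using Hoeffding_emp_risk[OF P(1) C \<eta>] by simp
qed

lemma
  assumes PS: "prob_space PS" and K: "K \<in> PS \<rightarrow>\<^sub>M prob_algebra MH"
  shows prob_space_joint_dist: "prob_space (joint_dist PS K MH)"
    and sets_joint_dist: "sets (joint_dist PS K MH) = sets (PS \<Otimes>\<^sub>M MH)"
proof -
  define ker where "ker = (\<lambda>s. distr (K s) (PS \<Otimes>\<^sub>M MH) (\<lambda>h. (s, h)))"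
  have ker: "ker \<in> PS \<rightarrow>\<^sub>M prob_algebra (PS \<Otimes>\<^sub>M MH)"
  proof (rule measurable_prob_algebraI)
    fix s assume s: "s \<in> space PS"
    have "K s \<in> space (prob_algebra MH)" using K s by (rule measurable_space)
    then have Ks: "prob_space (K s)" "sets (K s) = sets MH" by (auto simp: space_prob_algebra)
    have "(\<lambda>h. (s, h)) \<in> K s \<rightarrow>\<^sub>M PS \<Otimes>\<^sub>M MH"
      using s by (simp add: measurable_cong_sets[OF Ks(2) refl])
    with Ks(1) show "prob_space (ker s)" unfolding ker_def by (rule prob_space.prob_space_distr)
  next
    show "ker \<in> PS \<rightarrow>\<^sub>M subprob_algebra (PS \<Otimes>\<^sub>M MH)"
      unfolding ker_def
      by (rule measurable_distr2[where M=MH]) (auto intro: measurable_prob_algebraD[OF K])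
  qed
  have PS': "PS \<in> space (prob_algebra PS)" by (simp add: space_prob_algebra PS)
  have J: "joint_dist PS K MH = PS \<bind> ker" by (simp add: joint_dist_def ker_def)
  show "prob_space (joint_dist PS K MH)" unfolding J by (rule prob_space_bind'[OF PS' ker])
  show "sets (joint_dist PS K MH) = sets (PS \<Otimes>\<^sub>M MH)" unfolding J by (rule sets_bind'[OF PS' ker])
qed

lemma sample_size_bound_imp_le:
  fixes p \<delta> \<gamma> \<eta> :: real and I :: ereal
  assumes lower: "ereal (\<gamma> * ln p - ln (2 * exp (-2 * real n * \<eta>\<^sup>2))) \<le> I"
    and n_bound: "ereal (real n) \<ge> (I + ereal (ln 2 + \<gamma> * ln (1 / \<delta>))) / ereal (2 * \<eta>\<^sup>2)"
    and \<gamma>: "\<gamma> > 0" and \<eta>: "\<eta> > 0" and p: "p > 0" and \<delta>: "\<delta> > 0"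
  shows "p \<le> \<delta>"
proof -
  have \<eta>2: "2 * \<eta>\<^sup>2 > 0" using \<eta> by simp
  obtain r where r: "I = ereal r"
    using lower n_bound \<eta>2 by (cases I) auto
  have "real n \<ge> (r + (ln 2 + \<gamma> * ln (1 / \<delta>))) / (2 * \<eta>\<^sup>2)"
    using n_bound \<eta>2 by (simp add: r)
  then have "2 * \<eta>\<^sup>2 * real n \<ge> r + (ln 2 + \<gamma> * ln (1 / \<delta>))"
    using \<eta>2 by (simp add: field_simps)
  moreover have "\<gamma> * ln p - (ln 2 - 2 * real n * \<eta>\<^sup>2) \<le> r"
    using lower by (simp add: r ln_mult)
  ultimately have "\<gamma> * (ln p + ln (1 / \<delta>)) \<le> 0"
    by (simp add: algebra_simps)
  then have "ln p \<le> ln \<delta>"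
    using \<gamma> \<delta> by (simp add: mult_le_0_iff ln_div)
  then show ?thesis using p \<delta> by simp
qed

theorem corollary5:
  fixes MX :: "'x measure" and MY :: "'y measure"
    and P :: "('x \<times> 'y) measure"
    and MH :: "('x \<Rightarrow> 'y) measure"
    and K :: "(nat \<Rightarrow> 'x \<times> 'y) \<Rightarrow> ('x \<Rightarrow> 'y) measure"
    and n :: nat and \<eta> \<alpha> \<gamma> \<delta> :: real
  assumes P: "prob_space P" "sets P = sets (MX \<Otimes>\<^sub>M MY)"
    and loss_meas: "{(h, z) \<in> space (MH \<Otimes>\<^sub>M (MX \<Otimes>\<^sub>M MY)). h (fst z) \<noteq> snd z}
                      \<in> sets (MH \<Otimes>\<^sub>M (MX \<Otimes>\<^sub>M MY))"
    and K: "K \<in> sample_space n (MX \<Otimes>\<^sub>M MY) \<rightarrow>\<^sub>M prob_algebra MH"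
    and ac: "absolutely_continuous (iid_sample n P \<Otimes>\<^sub>M marginal_H (iid_sample n P) K)
                                   (joint_dist (iid_sample n P) K MH)"
    and \<eta>: "0 < \<eta>" "\<eta> < 1"
    and \<alpha>: "\<alpha> > 1" and \<gamma>: "\<gamma> = \<alpha> / (\<alpha> - 1)"
    and \<delta>: "0 < \<delta>" "\<delta> < 1"
    and n_bound: "ereal (real n) \<ge>
       (sibson_MI \<alpha> (iid_sample n P) MH (joint_dist (iid_sample n P) K MH)
          + ereal (ln 2 + \<gamma> * ln (1 / \<delta>))) / ereal (2 * \<eta>\<^sup>2)"
  shows "measure (joint_dist (iid_sample n P) K MH)
           {(s, h) \<in> space (sample_space n (MX \<Otimes>\<^sub>M MY) \<Otimes>\<^sub>M MH).
              \<bar>pop_risk P h - emp_risk n s h\<bar> > \<eta>} \<le> \<delta>"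
proof -
  define PS where "PS = iid_sample n P"
  define J where "J = joint_dist PS K MH"
  define E where "E = {(s, h) \<in> space (sample_space n (MX \<Otimes>\<^sub>M MY) \<Otimes>\<^sub>M MH).
                          \<bar>pop_risk P h - emp_risk n s h\<bar> > \<eta>}"
  have PS: "prob_space PS" unfolding PS_def iid_sample_def by (intro prob_space_PiM P(1))
  have "K \<in> PS \<rightarrow>\<^sub>M prob_algebra MH"
    unfolding PS_def by (subst measurable_cong_sets[OF sets_iid_sample[OF P(2)] refl]) (rule K)
  then have J: "prob_space J" unfolding J_def by (rule prob_space_joint_dist[OF PS])
  have E: "E \<in> sets (PS \<Otimes>\<^sub>M MH)"
    using sets_deviation_event[OF P loss_meas]
    by (simp add: E_def PS_def sets_pair_measure_cong[OF sets_iid_sample[OF P(2)] refl])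
  show ?thesis
  proof (cases "measure J E > 0")
    case False
    then show ?thesis using \<delta> by (simp add: J_def E_def PS_def not_less order_trans)
  next
    case True
    have tail: "measure (PS \<Otimes>\<^sub>M Q) E \<le> 2 * exp (-2 * real n * \<eta>\<^sup>2)"
      if "prob_space Q" "sets Q = sets MH" for Q
      unfolding PS_def E_def using measure_deviation_event_product_le[OF P loss_meas that] \<eta>(1) by simp
    have "ereal (\<gamma> * ln (measure J E) - ln (2 * exp (-2 * real n * \<eta>\<^sup>2))) \<le> sibson_MI \<alpha> PS MH J"
      unfolding \<gamma> by (rule sibson_MI_ge_ln_measure[OF J PS \<alpha> E True tail])
    then show ?thesis
      using n_bound \<alpha> \<eta>(1) \<delta>(1) True
      by (intro sample_size_bound_imp_le[of \<gamma> _ n \<eta> _ \<delta>, folded J_def PS_def])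
         (simp_all add: \<gamma> J_def PS_def E_def)
  qed
qed

end
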